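(* Consider the problem $\mathbf{x}^\star(t)=\arg\min_{\mathbf{x}\in\mathbb{R}^n} f_0(\mathbf{x},t)$ s.t. $f_i(\mathbf{x},t)\le0$, $i=1,\dots,p$, for $t\in[0,\infty)$, under Assumptions 1, 2, 3 below. Let $\mathbf{x}_0\in\mathbb{R}^n$ be arbitrary, let $s_0$ be given by $$s_0=\begin{cases}0 & \text{if } \max_i f_i(\mathbf{x}_0,0)\le 0,\\ \max_i f_i(\mathbf{x}_0,0)+\varepsilon & \text{if } \max_i f_i(\mathbf{x}_0,0)>0,\end{cases}$$ for some $\varepsilon>0$, and let $s(t)=s_0e^{-\alpha t}$ for some $\alpha>0$. Let $c:[0,\infty)\to(0,\infty)$ be continuously differentiable with $c(t)\to\infty$ as $t\to\infty$. Let $\mathbf{P}\in\mathbb{S}^n_{++}$ with $\mathbf{P}\succeq\sigma\mathbf{I}_n$, $\sigma>0$, and let $\tilde{\mathbf{z}}(t)$ solve $$\dot{\tilde{\mathbf{z}}}(t)=-\nabla_{\mathbf{x}\mathbf{x}}\tilde\Phi(\tilde{\mathbf{z}}(t),t)^{-1}\big(\mathbf{P}\nabla_{\mathbf{x}}\tilde\Phi(\tilde{\mathbf{z}}(t),t)+\nabla_{\mathbf{x}t}\tilde\Phi(\tilde{\mathbf{z}}(t),t)\big),\qquad\tilde{\mathbf{z}}(0)=\mathbf{x}_0,$$ where $\tilde\Phi(\mathbf{x},t)=f_0(\mathbf{x},t)-\frac{1}{c(t)}\sum_{i=1}^p\log(s(t)-f_i(\mathbf{x},t))$ on $\tilde{\mathcal{D}}(t)=\{\mathbf{x}: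 f_i(\mathbf{x},t)<s(t),\ i=1,\dots,p\}$. Then $\tilde{\mathbf{z}}(t)-\mathbf{x}^\star(t)\to 0$ as $t\to\infty$.
   Context: Assumption 1: $f_0(\mathbf{x},t)$ and $f_i(\mathbf{x},t)$, $i=1,\dots,p$, are twice continuously differentiable in $\mathbf{x}$ and continuously differentiable in $t$ for $t\ge0$; $\nabla_{\mathbf{x}\mathbf{x}} f_0(\mathbf{x},t)\succeq m\mathbf{I}$ for some $m>0$; each $f_i(\cdot,t)$ is convex for all $t\ge0$. Assumption 2 (Slater): there exists $\mathbf{x}^\dagger\in\mathbb{R}^n$ with $f_i(\mathbf{x}^\dagger,t)<0$ for all $i$ and all $t\ge0$. Optimal dual variables $\lambda^\star(t)=(\lambda_1^\star(t),\dots,\lambda_p^\star(t))$ satisfy with $\mathbf{x}^\star(t)$ the KKT conditions: $\nabla_{\mathbf{x}} f_0(\mathbf{x}^\star(t),t)+\sum_i\lambda_i^\star(t)\nabla_{\mathbf{x}} f_i(\mathbf{x}^\star(t),t)=0$, $\lambda_i^\star(t)f_i(\mathbf{x}^\star(t),t)=0$, $\lambda_i^\star(t)\ge0$, $f_i(\mathbf{x}^\star(t),t)\le0$. Assumption 3: for every $\alpha>0$, $\lambda_i^\star(t)e^{-\alpha t}\to0$ as $t\to\infty$ for all $i$. The solution $\tilde{\mathbf{z}}(t)$ is assumed to exist and remain in $\tilde{\mathcal{D}}(t)$ for all $t\ge0$. *)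

theory Defs
  imports "HOL-Analysis.Analysis"
begin

definition grad_x :: "(real^'n \<Rightarrow> real) \<Rightarrow> real^'n \<Rightarrow> real^'n" where
  "grad_x F x = (\<chi> j. frechet_derivative F (at x) (axis j 1))"

definition hess_x :: "(real^'n \<Rightarrow> real) \<Rightarrow> real^'n \<Rightarrow> real^'n^'n" where
  "hess_x F x = (\<chi> i j. frechet_derivative (\<lambda>y. grad_x F y $ i) (at x) (axis j 1))"

definition tderiv :: "(real \<Rightarrow> real) \<Rightarrow> real \<Rightarrow> real" where
  "tderiv g t = (THE d. (g has_real_derivative d) (at t within {0..}))"

definition grad_xt :: "(real^'n \<Rightarrow> real \<Rightarrow> real) \<Rightarrow> real^'n \<Rightarrow> real \<Rightarrow> real^'n" where
  "grad_xt F x t = (\<chi> i. tderiv (\<lambda>s. grad_x (\<lambda>y. F y s) x $ i) t)"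

definition C2_x :: "(real^'n \<Rightarrow> real) \<Rightarrow> bool" where
  "C2_x F \<longleftrightarrow> (\<forall>x. F differentiable (at x)) \<and>
     (\<forall>i x. (\<lambda>y. grad_x F y $ i) differentiable (at x)) \<and>
     continuous_on UNIV (hess_x F)"

definition C1_t :: "(real \<Rightarrow> real) \<Rightarrow> bool" where
  "C1_t g \<longleftrightarrow> (\<exists>D. (\<forall>t\<ge>0. (g has_real_derivative D t) (at t within {0..})) \<and>
                    continuous_on {0..} D)"

text \<open>Joint regularity in (x,t) implicit in Assumption 1 (needed for the mixed
  derivative in the ODE to make sense): jointly continuous function, gradient jointly
  differentiable, and Hessian, time derivative and mixed derivative jointly continuous.\<close>
definition joint_regular :: "(real^'n \<Rightarrow> real \<Rightarrow> real) \<Rightarrow> bool" where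
  "joint_regular F \<longleftrightarrow>
     continuous_on (UNIV \<times> {0..}) (\<lambda>(x,t). F x t) \<and>
     (\<forall>j x t. t \<ge> 0 \<longrightarrow> (\<lambda>(y,s). grad_x (\<lambda>z. F z s) y $ j)
          differentiable (at (x,t) within UNIV \<times> {0..})) \<and>
     continuous_on (UNIV \<times> {0..}) (\<lambda>(x,t). hess_x (\<lambda>y. F y t) x) \<and>
     continuous_on (UNIV \<times> {0..}) (\<lambda>(x,t). tderiv (\<lambda>s. F x s) t) \<and>
     continuous_on (UNIV \<times> {0..}) (\<lambda>(x,t). grad_xt F x t)"

definition assm1_smooth :: "(real^'n \<Rightarrow> real \<Rightarrow> real) \<Rightarrow> bool" where
  "assm1_smooth F \<longleftrightarrow> (\<forall>t\<ge>0. C2_x (\<lambda>x. F x t)) \<and> (\<forall>x. C1_t (\<lambda>t. F x t)) \<and> joint_regular F"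

end

theory Submission
  imports Defs
begin

text \<open>Along the flow, the barrier gradient \<open>g(t) = \<nabla>\<^sub>x\<Phi>(z(t),t)\<close> obeys the linear equation
  \<open>g' = -P g\<close>: by the chain rule \<open>g' = \<nabla>\<^sub>x\<^sub>x\<Phi> z' + \<nabla>\<^sub>x\<^sub>t\<Phi>\<close>, and substituting the flow
  \<open>z' = -(\<nabla>\<^sub>x\<^sub>x\<Phi>)\<^sup>-\<^sup>1 (P g + \<nabla>\<^sub>x\<^sub>t\<Phi>)\<close> leaves \<open>-P g\<close>. Since \<open>P \<succeq> \<sigma> I\<close>, \<open>|g(t)| \<le> e\<^sup>-\<^sup>\<sigma>\<^sup>t |g(0)|\<close>.
  On the other hand, strong monotonicity of \<open>\<nabla>f\<^sub>0\<close>, the tangent inequalities of the convex \<open>f\<^sub>i\<close>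
  and the KKT conditions give \<open>m |z - x\<^sup>\<star>|\<^sup>2 \<le> |g| |z - x\<^sup>\<star>| + p/c + s \<Sigma>\<^sub>i \<lambda>\<^sub>i\<close>; here \<open>p/c \<rightarrow> 0\<close>,
  and \<open>s \<lambda>\<^sub>i \<rightarrow> 0\<close> by Assumption 3 because \<open>s\<close> decays exponentially.\<close>

lemma vec_has_derivativeI:
  fixes f :: "'a::real_normed_vector \<Rightarrow> real^'n"
  assumes "\<And>i. ((\<lambda>x. f x $ i) has_derivative (\<lambda>h. f' h $ i)) (at a within S)"
  shows "(f has_derivative f') (at a within S)"
  using assms unfolding has_derivative_componentwise_within[of f f' a S]
  by (auto simp: Basis_vec_def inner_axis)

lemma linear_eq_sum_axis:
  fixes L :: "real^'n \<Rightarrow> real"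
  assumes "linear L"
  shows "L v = (\<Sum>j\<in>UNIV. v$j * L (axis j 1))"
proof -
  have "L v = L (\<Sum>j\<in>UNIV. v$j *\<^sub>R axis j 1)"
    using basis_expansion[of v] by (simp add: scalar_mult_eq_scaleR)
  also have "\<dots> = (\<Sum>j\<in>UNIV. v$j * L (axis j 1))"
    using assms by (simp add: linear_sum linear_scale)
  finally show ?thesis .
qed

lemma has_derivative_grad_x:
  assumes "F differentiable (at x)"
  shows "(F has_derivative (\<lambda>h. grad_x F x \<bullet> h)) (at x)"
proof -
  have d: "(F has_derivative frechet_derivative F (at x)) (at x)"
    using assms frechet_derivative_works by blast
  have l: "linear (frechet_derivative F (at x))"
    using d has_derivative_linear by blast
  have "frechet_derivative F (at x) = (\<lambda>h. grad_x F x \<bullet> h)"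
    by (rule ext, subst linear_eq_sum_axis[OF l]) (simp add: grad_x_def inner_vec_def mult.commute)
  then show ?thesis using d by simp
qed

lemma grad_x_eqI:
  assumes "(F has_derivative (\<lambda>h. g \<bullet> h)) (at x)"
  shows "grad_x F x = g"
proof -
  have "frechet_derivative F (at x) = (\<lambda>h. g \<bullet> h)"
    using frechet_derivative_at[OF assms] by simp
  then show ?thesis unfolding grad_x_def by (simp add: vec_eq_iff inner_axis)
qed

lemma has_derivative_hess_x:
  assumes "C2_x F"
  shows "(grad_x F has_derivative (\<lambda>h. hess_x F x *v h)) (at x)"
proof (rule vec_has_derivativeI)
  fix i
  have d: "((\<lambda>y. grad_x F y $ i) has_derivative frechet_derivative (\<lambda>y. grad_x F y $ i) (at x)) (at x)"
    using assms frechet_derivative_works unfolding C2_x_def by blast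
  have l: "linear (frechet_derivative (\<lambda>y. grad_x F y $ i) (at x))"
    using d has_derivative_linear by blast
  have "frechet_derivative (\<lambda>y. grad_x F y $ i) (at x) = (\<lambda>h. (hess_x F x *v h) $ i)"
    by (rule ext, subst linear_eq_sum_axis[OF l]) (simp add: hess_x_def matrix_vector_mult_def mult.commute)
  then show "((\<lambda>y. grad_x F y $ i) has_derivative (\<lambda>h. (hess_x F x *v h) $ i)) (at x)"
    using d by simp
qed

lemma hess_x_eqI:
  assumes "open U" "x \<in> U" "\<And>y. y \<in> U \<Longrightarrow> grad_x F y = G y" "(G has_derivative A) (at x)"
  shows "hess_x F x *v h = A h"
proof -
  have lin: "linear (\<lambda>h. A h $ i)" for i
    using has_derivative_linear[OF assms(4)]
    by (simp add: linear_compose[of _ "\<lambda>x. x $ i", unfolded o_def]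
        bounded_linear.linear[OF bounded_linear_vec_nth])
  have "frechet_derivative (\<lambda>y. grad_x F y $ i) (at x) = (\<lambda>h. A h $ i)" for i
  proof -
    have "((\<lambda>y. G y $ i) has_derivative (\<lambda>h. A h $ i)) (at x)"
      using bounded_linear.has_derivative[OF bounded_linear_vec_nth assms(4)] .
    then have "((\<lambda>y. grad_x F y $ i) has_derivative (\<lambda>h. A h $ i)) (at x)"
      by (rule has_derivative_transform_within_open[OF _ assms(1,2)]) (use assms(3) in auto)
    then show ?thesis by (rule frechet_derivative_at[symmetric])
  qed
  then show ?thesis
    unfolding vec_eq_iff matrix_vector_mult_def hess_x_def
    by (auto simp: linear_eq_sum_axis[OF lin, of h] mult.commute)
qed

lemma has_real_derivative_along_line:
  assumes "\<And>y. F differentiable (at y)"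
  shows "((\<lambda>h. F (x + h *\<^sub>R v)) has_real_derivative (grad_x F (x + \<tau> *\<^sub>R v) \<bullet> v)) (at \<tau>)"
proof -
  have l: "((\<lambda>h. x + h *\<^sub>R v) has_derivative (\<lambda>h. h *\<^sub>R v)) (at \<tau>)"
    by (auto intro!: derivative_eq_intros)
  have "((\<lambda>h. F (x + h *\<^sub>R v)) has_derivative (\<lambda>h. grad_x F (x + \<tau> *\<^sub>R v) \<bullet> (h *\<^sub>R v))) (at \<tau>)"
    using diff_chain_at[OF l has_derivative_grad_x[OF assms]] by (simp add: o_def)
  then show ?thesis unfolding has_field_derivative_def by (simp add: mult_commute_abs)
qed

lemma has_real_derivative_grad_x_along_line:
  assumes "C2_x F"
  shows "((\<lambda>h. grad_x F (x + h *\<^sub>R v) \<bullet> v) has_real_derivative (v \<bullet> (hess_x F (x + \<tau> *\<^sub>R v) *v v))) (at \<tau>)"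
proof -
  have l: "((\<lambda>h. x + h *\<^sub>R v) has_derivative (\<lambda>h. h *\<^sub>R v)) (at \<tau>)"
    by (auto intro!: derivative_eq_intros)
  have "((\<lambda>h. grad_x F (x + h *\<^sub>R v)) has_derivative (\<lambda>h. hess_x F (x + \<tau> *\<^sub>R v) *v (h *\<^sub>R v))) (at \<tau>)"
    using diff_chain_at[OF l has_derivative_hess_x[OF assms]] by (simp add: o_def)
  then have "((\<lambda>h. grad_x F (x + h *\<^sub>R v) \<bullet> v) has_derivative
      (\<lambda>h. (hess_x F (x + \<tau> *\<^sub>R v) *v (h *\<^sub>R v)) \<bullet> v)) (at \<tau>)"
    by (auto intro!: derivative_eq_intros)
  then show ?thesis unfolding has_field_derivative_def
    by (simp add: matrix_vector_mult_scaleR inner_commute mult_commute_abs)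
qed

lemma strongly_convex_first_order:
  assumes C: "C2_x F" and m: "\<forall>x v. v \<bullet> (hess_x F x *v v) \<ge> m * (v \<bullet> v)"
  shows "F y \<ge> F x + grad_x F x \<bullet> (y - x) + m / 2 * ((y - x) \<bullet> (y - x))"
proof -
  define v where "v = y - x"
  have dF: "\<And>y. F differentiable (at y)" using C unfolding C2_x_def by blast
  define \<psi> where "\<psi> h = grad_x F (x + h *\<^sub>R v) \<bullet> v" for h
  have mono: "\<psi> 0 + m * \<tau> * (v \<bullet> v) \<le> \<psi> \<tau>" if "0 \<le> \<tau>" for \<tau>
  proof -
    have "(\<lambda>h. \<psi> h - m * h * (v \<bullet> v)) 0 \<le> (\<lambda>h. \<psi> h - m * h * (v \<bullet> v)) \<tau>"
    proof (rule DERIV_nonneg_imp_nondecreasing[OF that])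
      fix h
      have "((\<lambda>h. \<psi> h - m * h * (v \<bullet> v)) has_real_derivative
              (v \<bullet> (hess_x F (x + h *\<^sub>R v) *v v) - m * (v \<bullet> v))) (at h)"
        unfolding \<psi>_def using has_real_derivative_grad_x_along_line[OF C, of x v h]
        by (auto intro!: derivative_eq_intros)
      then show "\<exists>y. ((\<lambda>h. \<psi> h - m * h * (v \<bullet> v)) has_real_derivative y) (at h) \<and> 0 \<le> y"
        using m by force
    qed
    then show ?thesis by simp
  qed
  have "(\<lambda>h. F (x + h *\<^sub>R v) - h * \<psi> 0 - m / 2 * h^2 * (v \<bullet> v)) 0
        \<le> (\<lambda>h. F (x + h *\<^sub>R v) - h * \<psi> 0 - m / 2 * h^2 * (v \<bullet> v)) 1"
  proof (rule DERIV_nonneg_imp_nondecreasing[of 0 1])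
    fix h :: real assume h: "0 \<le> h" "h \<le> 1"
    have "((\<lambda>h. F (x + h *\<^sub>R v) - h * \<psi> 0 - m / 2 * h^2 * (v \<bullet> v)) has_real_derivative
            (\<psi> h - \<psi> 0 - m * h * (v \<bullet> v))) (at h)"
      unfolding \<psi>_def using has_real_derivative_along_line[OF dF, of x v h]
      by (auto intro!: derivative_eq_intros simp: power2_eq_square)
    then show "\<exists>y. ((\<lambda>h. F (x + h *\<^sub>R v) - h * \<psi> 0 - m / 2 * h^2 * (v \<bullet> v)) has_real_derivative y)
                 (at h) \<and> 0 \<le> y"
      using mono[OF h(1)] by force
  qed simp
  then show ?thesis by (simp add: v_def \<psi>_def)
qed

lemma strongly_convex_grad_x_monotone:
  assumes "C2_x F" and "\<forall>x v. v \<bullet> (hess_x F x *v v) \<ge> m * (v \<bullet> v)"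
  shows "m * norm (x - y)^2 \<le> (grad_x F x - grad_x F y) \<bullet> (x - y)"
proof -
  have "(x - y) \<bullet> (x - y) = norm (x - y)^2" "(y - x) \<bullet> (y - x) = norm (x - y)^2"
    by (metis power2_norm_eq_inner, metis norm_minus_commute power2_norm_eq_inner)
  then have "F y \<ge> F x + grad_x F x \<bullet> (y - x) + m / 2 * norm (x - y)^2"
    "F x \<ge> F y + grad_x F y \<bullet> (x - y) + m / 2 * norm (x - y)^2"
    using strongly_convex_first_order[OF assms, of x y] strongly_convex_first_order[OF assms, of y x]
    by metis+
  moreover have "(grad_x F x - grad_x F y) \<bullet> (x - y) = - (grad_x F x \<bullet> (y - x)) - grad_x F y \<bullet> (x - y)"
    by (simp add: inner_diff_left inner_diff_right)
  moreover have "m * norm (x - y)^2 = m / 2 * norm (x - y)^2 + m / 2 * norm (x - y)^2"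
    by (metis field_sum_of_halves distrib_right)
  ultimately show ?thesis by linarith
qed

lemma convex_on_along_line:
  assumes "convex_on UNIV F"
  shows "convex_on UNIV (\<lambda>h::real. F (x + h *\<^sub>R v))"
  unfolding convex_on_def
proof (intro conjI convex_UNIV allI impI ballI)
  fix a b u w :: real assume uw: "0 \<le> u" "0 \<le> w" "u + w = 1"
  have "u *\<^sub>R (x + a *\<^sub>R v) + w *\<^sub>R (x + b *\<^sub>R v) = (u + w) *\<^sub>R x + (u * a + w * b) *\<^sub>R v"
    by (simp add: algebra_simps)
  then have "x + (u * a + w * b) *\<^sub>R v = u *\<^sub>R (x + a *\<^sub>R v) + w *\<^sub>R (x + b *\<^sub>R v)"
    using uw by simp
  also have "F \<dots> \<le> u * F (x + a *\<^sub>R v) + w * F (x + b *\<^sub>R v)"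
    using assms uw unfolding convex_on_def by blast
  finally show "F (x + (u *\<^sub>R a + w *\<^sub>R b) *\<^sub>R v) \<le> u * F (x + a *\<^sub>R v) + w * F (x + b *\<^sub>R v)"
    by simp
qed

lemma convex_on_grad_x_tangent:
  assumes cv: "convex_on UNIV F" and d: "F differentiable (at x)"
  shows "F y \<ge> F x + grad_x F x \<bullet> (y - x)"
proof -
  define v where "v = y - x"
  have l: "((\<lambda>h. x + h *\<^sub>R v) has_derivative (\<lambda>h. h *\<^sub>R v)) (at 0)"
    by (auto intro!: derivative_eq_intros)
  have "(F has_derivative (\<lambda>h. grad_x F x \<bullet> h)) (at (x + 0 *\<^sub>R v))"
    using has_derivative_grad_x[OF d] by simp
  from diff_chain_at[OF l this]
  have "((\<lambda>h. F (x + h *\<^sub>R v)) has_derivative (\<lambda>h. grad_x F x \<bullet> (h *\<^sub>R v))) (at 0)"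
    by (simp add: o_def)
  then have "((\<lambda>h. F (x + h *\<^sub>R v)) has_real_derivative (grad_x F x \<bullet> v)) (at 0)"
    unfolding has_field_derivative_def by (simp add: mult_commute_abs)
  then have "F (x + 1 *\<^sub>R v) - F (x + 0 *\<^sub>R v) \<ge> (grad_x F x \<bullet> v) * (1 - 0)"
    by (intro convex_on_imp_above_tangent[OF convex_on_along_line[OF cv]]) auto
  then show ?thesis by (simp add: v_def)
qed

lemma convex_on_hess_x_nonneg:
  assumes C: "C2_x F" and cv: "convex_on UNIV F"
  shows "v \<bullet> (hess_x F x *v v) \<ge> 0"
proof (rule ccontr)
  assume neg: "\<not> ?thesis"
  have dF: "\<And>y. F differentiable (at y)" using C unfolding C2_x_def by blast
  define \<psi> where "\<psi> h = grad_x F (x + h *\<^sub>R v) \<bullet> v" for h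
  have "DERIV \<psi> 0 :> v \<bullet> (hess_x F x *v v)"
    using has_real_derivative_grad_x_along_line[OF C, of x v 0] unfolding \<psi>_def by simp
  from DERIV_neg_dec_right[OF this] neg
  obtain d where d: "d > 0" "\<And>h. 0 < h \<Longrightarrow> h < d \<Longrightarrow> \<psi> h < \<psi> 0"
    by auto
  define h where "h = d / 2"
  have h: "h > 0" "h < d" using d by (auto simp: h_def)
  \<comment> \<open>adding the tangent inequalities at both ends of the segment shows \<open>\<psi>\<close> is monotone\<close>
  have "F (x + h *\<^sub>R v) \<ge> F x + grad_x F x \<bullet> (x + h *\<^sub>R v - x)"
       "F x \<ge> F (x + h *\<^sub>R v) + grad_x F (x + h *\<^sub>R v) \<bullet> (x - (x + h *\<^sub>R v))"
    by (rule convex_on_grad_x_tangent[OF cv dF])+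
  then have "h * \<psi> h \<ge> h * \<psi> 0"
    unfolding \<psi>_def by (simp add: inner_diff_right algebra_simps)
  then have "\<psi> h \<ge> \<psi> 0" using h by simp
  then show False using d(2)[OF h] by simp
qed

lemma at_within_atLeast_neq_bot: "(t::real) \<ge> a \<Longrightarrow> at t within {a..} \<noteq> bot"
proof
  assume "t \<ge> a" "at t within {a..} = bot"
  moreover have "at_right t \<le> at t within {a..}"
    using \<open>t \<ge> a\<close> by (intro at_le) auto
  ultimately show False using trivial_limit_at_right_real[of t] by (simp add: bot_unique)
qed

lemma tderiv_eqI:
  assumes "(g has_real_derivative d) (at t within {0..})" "t \<ge> 0"
  shows "tderiv g t = d"
  unfolding tderiv_def
  using assms has_field_derivative_unique[OF _ _ at_within_atLeast_neq_bot[OF assms(2)]]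
  by (intro the_equality) auto

lemma has_real_derivative_tderiv:
  assumes "C1_t g" "t \<ge> 0"
  shows "(g has_real_derivative tderiv g t) (at t within {0..})"
proof -
  obtain D where "\<forall>t\<ge>0. (g has_real_derivative D t) (at t within {0..})"
    using assms unfolding C1_t_def by blast
  then show ?thesis using tderiv_eqI assms(2) by metis
qed

lemma grad_xt_eqI:
  assumes G: "(G has_vector_derivative v) (at t within {0..})" and t: "t \<ge> 0"
    and ev: "\<forall>\<^sub>F \<tau> in at t within {0..}. grad_x (\<lambda>y. F y \<tau>) x = G \<tau>"
    and eq: "grad_x (\<lambda>y. F y t) x = G t"
  shows "grad_xt F x t = v"
  unfolding grad_xt_def vec_eq_iff
proof
  fix i
  have "((\<lambda>\<tau>. G \<tau> $ i) has_real_derivative v $ i) (at t within {0..})"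
    using bounded_linear.has_derivative[OF bounded_linear_vec_nth G[unfolded has_vector_derivative_def]]
    by (simp add: has_field_derivative_def mult_commute_abs)
  moreover have "\<forall>\<^sub>F \<tau> in at t within {0..}. grad_x (\<lambda>y. F y \<tau>) x $ i = G \<tau> $ i"
    using ev by eventually_elim simp
  moreover have "grad_x (\<lambda>y. F y t) x $ i = G t $ i" using eq by simp
  ultimately have "((\<lambda>\<tau>. grad_x (\<lambda>y. F y \<tau>) x $ i) has_real_derivative v $ i) (at t within {0..})"
    using has_field_derivative_cong_eventually[of "\<lambda>\<tau>. grad_x (\<lambda>y. F y \<tau>) x $ i" "\<lambda>\<tau>. G \<tau> $ i"]
    by blast
  then show "(\<chi> i. tderiv (\<lambda>s. grad_x (\<lambda>y. F y s) x $ i) t) $ i = v $ i"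
    using tderiv_eqI t by simp
qed

lemma assm1_smooth_differentiable:
  assumes A: "assm1_smooth F" and t: "t \<ge> 0"
  shows "(\<lambda>q. F (fst q) (snd q)) differentiable (at (x, t) within UNIV \<times> {0..})"
proof -
  have "C2_x (\<lambda>y. F y t)" using A t unfolding assm1_smooth_def by blast
  then have fx: "((\<lambda>x. F x t) has_derivative (\<lambda>h. grad_x (\<lambda>y. F y t) x \<bullet> h)) (at x within UNIV)"
    using has_derivative_grad_x unfolding C2_x_def by blast
  have fy: "((\<lambda>y. F x' y) has_derivative blinfun_apply (blinfun_scaleR_left (tderiv (\<lambda>s. F x' s) y)))
      (at y within {0..})" if "x' \<in> UNIV" "y \<in> {0..}" for x' y
  proof -
    have "C1_t (\<lambda>s. F x' s)" using A unfolding assm1_smooth_def by blast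
    then have "((\<lambda>s. F x' s) has_real_derivative tderiv (\<lambda>s. F x' s) y) (at y within {0..})"
      using has_real_derivative_tderiv that by auto
    then show ?thesis unfolding has_field_derivative_def by (simp add: mult_commute_abs)
  qed
  have "continuous_on (UNIV \<times> {0..}) (\<lambda>(x, t). tderiv (\<lambda>s. F x s) t)"
    using A unfolding assm1_smooth_def joint_regular_def by blast
  then have "continuous (at (x, t) within UNIV \<times> {0..}) (\<lambda>(x, t). tderiv (\<lambda>s. F x s) t)"
    using t by (simp add: continuous_on_eq_continuous_within)
  then have fyc: "continuous (at (x, t) within UNIV \<times> {0..})
      (\<lambda>(x, y). blinfun_scaleR_left (tderiv (\<lambda>s. F x s) y))"
    using bounded_linear.continuous[OF bounded_linear_blinfun_scaleR_left]
    by (simp add: case_prod_beta')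
  have "((\<lambda>(x, y). F x y) has_derivative
      (\<lambda>(hx, ht). grad_x (\<lambda>y. F y t) x \<bullet> hx + blinfun_scaleR_left (tderiv (\<lambda>s. F x s) t) ht))
      (at (x, t) within UNIV \<times> {0..})"
    by (rule has_derivative_partialsI[OF fx fy fyc]) (use t in auto)
  then show ?thesis unfolding differentiable_def case_prod_beta' by blast
qed

lemma assm1_smooth_grad_x_differentiable:
  assumes A: "assm1_smooth F" and t: "t \<ge> 0"
  shows "(\<lambda>q. grad_x (\<lambda>w. F w (snd q)) (fst q)) differentiable (at (x, t) within UNIV \<times> {0..})"
proof -
  have "\<forall>j. \<exists>Dj. ((\<lambda>(y, s). grad_x (\<lambda>w. F w s) y $ j) has_derivative Dj) (at (x, t) within UNIV \<times> {0..})"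
    using A t unfolding assm1_smooth_def joint_regular_def differentiable_def by blast
  then obtain Dj where "\<And>j. ((\<lambda>(y, s). grad_x (\<lambda>w. F w s) y $ j) has_derivative Dj j)
      (at (x, t) within UNIV \<times> {0..})"
    by metis
  then have "((\<lambda>q. grad_x (\<lambda>w. F w (snd q)) (fst q)) has_derivative (\<lambda>h. \<chi> j. Dj j h))
      (at (x, t) within UNIV \<times> {0..})"
    by (intro vec_has_derivativeI) (simp add: case_prod_beta')
  then show ?thesis unfolding differentiable_def by blast
qed

lemma has_vector_derivative_joint_comp:
  assumes G: "((\<lambda>q. G (fst q) (snd q)) has_derivative DG) (at (z t, t) within UNIV \<times> S)"
    and z: "(z has_vector_derivative z') (at t within S)"
  shows "((\<lambda>\<tau>. G (z \<tau>) \<tau>) has_vector_derivative DG (z', 1)) (at t within S)"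
proof -
  have curve: "((\<lambda>\<tau>. (z \<tau>, \<tau>)) has_derivative (\<lambda>h. (h *\<^sub>R z', h))) (at t within S)"
    using z unfolding has_vector_derivative_def by (intro has_derivative_Pair has_derivative_ident)
  have "((\<lambda>q. G (fst q) (snd q)) has_derivative DG)
      (at ((\<lambda>\<tau>. (z \<tau>, \<tau>)) t) within (\<lambda>\<tau>. (z \<tau>, \<tau>)) ` S)"
    by (rule has_derivative_subset[OF G]) auto
  from diff_chain_within[OF curve this]
  have "((\<lambda>\<tau>. G (z \<tau>) \<tau>) has_derivative (\<lambda>h. DG (h *\<^sub>R z', h))) (at t within S)"
    by (simp add: o_def)
  moreover have "DG (h *\<^sub>R z', h) = h *\<^sub>R DG (z', 1)" for h
    using linear_scale[OF has_derivative_linear[OF G], of h "(z', 1)"] by simp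
  ultimately show ?thesis unfolding has_vector_derivative_def by simp
qed

lemma has_derivative_joint_slice:
  assumes G: "((\<lambda>q. G (fst q) (snd q)) has_derivative DG) (at (x, t) within UNIV \<times> S)"
    and "t \<in> S"
  shows "((\<lambda>y. G y t) has_derivative (\<lambda>h. DG (h, 0))) (at x)"
proof -
  have slice: "((\<lambda>y. (y, t)) has_derivative (\<lambda>h. (h, 0))) (at x within UNIV)"
    by (auto intro!: derivative_eq_intros)
  have "((\<lambda>q. G (fst q) (snd q)) has_derivative DG)
      (at ((\<lambda>y. (y, t)) x) within (\<lambda>y. (y, t)) ` UNIV)"
    by (rule has_derivative_subset[OF G]) (use \<open>t \<in> S\<close> in auto)
  from diff_chain_within[OF slice this] show ?thesis by (simp add: o_def)
qed

lemma coercive_matrix_inv_right: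
  fixes A :: "real^'n^'n"
  assumes coercive: "\<And>v. v \<bullet> (A *v v) \<ge> m * (v \<bullet> v)" and m: "m > 0"
  shows "A *v (matrix_inv A *v w) = w"
proof -
  have "inj ((*v) A)"
  proof (rule injI)
    fix u v assume "A *v u = A *v v"
    then have "A *v (u - v) = 0" by (simp add: matrix_vector_mult_diff_distrib)
    then have "m * ((u - v) \<bullet> (u - v)) \<le> 0" using coercive[of "u - v"] by simp
    then have "(u - v) \<bullet> (u - v) \<le> 0" using m by (simp add: mult_le_0_iff)
    then show "u = v" by (metis inner_gt_zero_iff not_le right_minus_eq)
  qed
  then have "invertible A"
    using matrix_left_invertible_injective invertible_left_inverse by blast
  then have "A ** matrix_inv A = mat 1"
    unfolding invertible_def matrix_inv_def by (rule someI_ex[THEN conjunct1])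
  then show ?thesis by (simp add: matrix_vector_mul_assoc)
qed

lemma dissipative_inner_self_decay:
  fixes g :: "real \<Rightarrow> 'a::real_inner"
  assumes g: "\<And>t. t \<ge> 0 \<Longrightarrow> (g has_vector_derivative g' t) (at t within {0..})"
    and dissipative: "\<And>t. t \<ge> 0 \<Longrightarrow> g t \<bullet> g' t \<le> - \<sigma> * (g t \<bullet> g t)"
    and t: "t \<ge> 0"
  shows "g t \<bullet> g t \<le> exp (- (2 * \<sigma>) * t) * (g 0 \<bullet> g 0)"
proof -
  define w where "w \<tau> = exp (2 * \<sigma> * \<tau>) * (g \<tau> \<bullet> g \<tau>)" for \<tau>
  define w' where "w' \<tau> = exp (2 * \<sigma> * \<tau>) * (2 * \<sigma> * (g \<tau> \<bullet> g \<tau>) + 2 * (g \<tau> \<bullet> g' \<tau>))" for \<tau>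
  have dw: "(w has_real_derivative w' \<tau>) (at \<tau> within {0..})" if "\<tau> \<ge> 0" for \<tau>
  proof -
    have gd: "(g has_derivative (\<lambda>h. h *\<^sub>R g' \<tau>)) (at \<tau> within {0..})"
      using g[OF that] unfolding has_vector_derivative_def .
    have "((\<lambda>\<tau>. g \<tau> \<bullet> g \<tau>) has_real_derivative (2 * (g \<tau> \<bullet> g' \<tau>))) (at \<tau> within {0..})"
      unfolding has_field_derivative_def
      by (rule has_derivative_eq_rhs[OF has_derivative_inner[OF gd gd]])
         (auto simp: fun_eq_iff inner_commute algebra_simps)
    then show ?thesis unfolding w_def w'_def
      by (auto intro!: derivative_eq_intros simp: algebra_simps)
  qed
  have w'_nonpos: "w' \<tau> \<le> 0" if "\<tau> \<ge> 0" for \<tau>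
    using dissipative[OF that] unfolding w'_def by (simp add: mult_nonneg_nonpos)
  have "w t \<le> w 0"
  proof (rule DERIV_nonpos_imp_decreasing_open[OF t])
    fix x :: real assume x: "0 < x" "x < t"
    have "at x within {0..} = at x"
      using x by (intro at_within_interior) auto
    then show "\<exists>y. (w has_real_derivative y) (at x) \<and> y \<le> 0"
      using dw[of x] w'_nonpos[of x] x by auto
  next
    show "continuous_on {0..t} w"
      by (rule DERIV_continuous_on[of _ _ w']) (use DERIV_subset[OF dw] in fastforce)
  qed
  then have "exp (- (2 * \<sigma>) * t) * (exp (2 * \<sigma> * t) * (g t \<bullet> g t)) \<le> exp (- (2 * \<sigma>) * t) * (g 0 \<bullet> g 0)"
    by (simp add: w_def)
  then show ?thesis by (simp add: mult.assoc[symmetric] exp_add[symmetric])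
qed

lemma dissipative_tendsto_zero:
  fixes g :: "real \<Rightarrow> 'a::real_inner"
  assumes "\<And>t. t \<ge> 0 \<Longrightarrow> (g has_vector_derivative g' t) (at t within {0..})"
    and "\<And>t. t \<ge> 0 \<Longrightarrow> g t \<bullet> g' t \<le> - \<sigma> * (g t \<bullet> g t)"
    and "\<sigma> > 0"
  shows "(g \<longlongrightarrow> 0) at_top"
proof -
  have bound: "\<forall>\<^sub>F t in at_top. norm (g t) \<le> sqrt (exp (- (2 * \<sigma>) * t) * (g 0 \<bullet> g 0))"
    using eventually_ge_at_top[of 0]
    by eventually_elim (use dissipative_inner_self_decay[OF assms(1,2)] in \<open>simp add: norm_eq_sqrt_inner\<close>)
  have "filterlim (\<lambda>t. - (2 * \<sigma>) * t) at_bot at_top"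
    using \<open>\<sigma> > 0\<close> by (intro filterlim_tendsto_neg_mult_at_bot[OF tendsto_const] filterlim_ident) auto
  from filterlim_compose[OF exp_at_bot this]
  have "((\<lambda>t. exp (- (2 * \<sigma>) * t) * (g 0 \<bullet> g 0)) \<longlongrightarrow> 0) at_top"
    by (rule tendsto_mult_left_zero)
  then have "((\<lambda>t. sqrt (exp (- (2 * \<sigma>) * t) * (g 0 \<bullet> g 0))) \<longlongrightarrow> 0) at_top"
    using tendsto_real_sqrt by fastforce
  with bound show ?thesis by (rule Lim_null_comparison)
qed

lemma sum_exp_decay_tendsto_zero:
  fixes lam :: "real \<Rightarrow> 'i \<Rightarrow> real"
  assumes "\<And>i. i \<in> I \<Longrightarrow> ((\<lambda>t. lam t i * exp (- \<alpha> * t)) \<longlongrightarrow> 0) at_top"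
  shows "((\<lambda>t. s0 * exp (- \<alpha> * t) * (\<Sum>i\<in>I. lam t i)) \<longlongrightarrow> 0) at_top"
proof -
  have "((\<lambda>t. \<Sum>i\<in>I. s0 * (lam t i * exp (- \<alpha> * t))) \<longlongrightarrow> 0) at_top"
    by (rule tendsto_null_sum) (rule tendsto_mult_right_zero[OF assms])
  moreover have "(\<Sum>i\<in>I. s0 * (lam t i * exp (- \<alpha> * t))) = s0 * exp (- \<alpha> * t) * (\<Sum>i\<in>I. lam t i)" for t
    by (simp add: sum_distrib_left sum_distrib_right mult.assoc mult.commute[of "exp _"])
  ultimately show ?thesis by simp
qed

lemma sq_le_of_quadratic_le:
  fixes m A N r :: real
  assumes "m > 0" "A \<ge> 0" "N \<ge> 0" "r \<ge> 0" "m * r^2 \<le> A + N * r"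
  shows "r^2 \<le> 4 * N^2 / m^2 + 2 * A / m"
proof (cases "N * r \<le> m * r^2 / 2")
  case True
  then have "r^2 \<le> 2 * A / m" using assms by (simp add: field_simps)
  moreover have "0 \<le> 4 * N^2 / m^2" by simp
  ultimately show ?thesis by linarith
next
  case False
  then have "m * r^2 < 2 * N * r" by linarith
  then have "m * r < 2 * N" using \<open>r \<ge> 0\<close> by (cases "r = 0") (auto simp: power2_eq_square)
  then have "r^2 \<le> (2 * N / m)^2" using assms by (intro power_mono) (auto simp: field_simps)
  moreover have "0 \<le> 2 * A / m" using assms by simp
  ultimately show ?thesis by (simp add: power_divide power_mult_distrib)
qed

lemma barrier_multiplier_gap:
  fixes a b :: "'i \<Rightarrow> real"
  assumes "\<And>k. k \<in> I \<Longrightarrow> b k \<le> 0" "\<And>k. k \<in> I \<Longrightarrow> a k < s" "s \<ge> 0" "c > 0"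
  shows "- (card I / c) \<le> (\<Sum>k\<in>I. (a k - b k) / (c * (s - a k)))"
proof -
  have "- (1 / c) \<le> (a k - b k) / (c * (s - a k))" if "k \<in> I" for k
    using assms(1,2)[OF that] assms(3,4) by (simp add: field_simps)
  then have "(\<Sum>k\<in>I. - (1 / c)) \<le> (\<Sum>k\<in>I. (a k - b k) / (c * (s - a k)))"
    by (rule sum_mono)
  then show ?thesis by simp
qed

lemma complementary_slackness_gap:
  fixes a b lam :: "'i \<Rightarrow> real"
  assumes "\<And>k. k \<in> I \<Longrightarrow> lam k \<ge> 0 \<and> lam k * b k = 0" "\<And>k. k \<in> I \<Longrightarrow> a k \<le> s"
  shows "(\<Sum>k\<in>I. lam k * (a k - b k)) \<le> s * sum lam I"
proof -
  have "lam k * (a k - b k) \<le> lam k * s" if "k \<in> I" for k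
  proof -
    have "lam k * (a k - b k) = lam k * a k"
      using assms(1)[OF that] by (simp add: right_diff_distrib)
    also have "\<dots> \<le> lam k * s"
      using assms that by (simp add: mult_left_mono)
    finally show ?thesis .
  qed
  then have "(\<Sum>k\<in>I. lam k * (a k - b k)) \<le> (\<Sum>k\<in>I. lam k * s)"
    by (rule sum_mono)
  then show ?thesis by (simp add: sum_distrib_left mult.commute)
qed

text \<open>The barrier weights \<open>\<mu>\<^sub>k = 1 / (c (s - F\<^sub>k x))\<close> act as approximate multipliers at \<open>x\<close>;
  comparing them with the exact multipliers \<open>\<lambda>\<close> at \<open>y\<close> bounds the distance by the residual \<open>g\<close>.\<close>
lemma barrier_stationarity_error_bound:
  fixes F0 :: "real^'n \<Rightarrow> real" and F :: "'i \<Rightarrow> real^'n \<Rightarrow> real"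
  assumes F0: "C2_x F0" "\<forall>x v. v \<bullet> (hess_x F0 x *v v) \<ge> m * (v \<bullet> v)" "m > 0"
    and F: "\<And>k. k \<in> I \<Longrightarrow> convex_on UNIV (F k)" "\<And>k x. k \<in> I \<Longrightarrow> F k differentiable (at x)"
    and stationary: "grad_x F0 y + (\<Sum>k\<in>I. lam k *\<^sub>R grad_x (F k) y) = 0"
    and KKT: "\<And>k. k \<in> I \<Longrightarrow> lam k \<ge> 0 \<and> lam k * F k y = 0 \<and> F k y \<le> 0"
    and x: "\<And>k. k \<in> I \<Longrightarrow> F k x < s" and "s \<ge> 0" "c > 0"
  defines "g \<equiv> grad_x F0 x + (1 / c) *\<^sub>R (\<Sum>k\<in>I. (1 / (s - F k x)) *\<^sub>R grad_x (F k) x)"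
  shows "norm (x - y)^2 \<le> 4 * norm g^2 / m^2 + 2 * (card I / c + s * sum lam I) / m"
proof -
  define \<mu> where "\<mu> k = 1 / (c * (s - F k x))" for k
  have gx: "grad_x F0 x = g - (\<Sum>k\<in>I. \<mu> k *\<^sub>R grad_x (F k) x)"
    by (simp add: g_def \<mu>_def scaleR_sum_right)
  have gy: "grad_x F0 y = - (\<Sum>k\<in>I. lam k *\<^sub>R grad_x (F k) y)"
    using stationary by (simp add: eq_neg_iff_add_eq_0)
  have tangents: "F k x - F k y \<le> grad_x (F k) x \<bullet> (x - y)"
    "grad_x (F k) y \<bullet> (x - y) \<le> F k x - F k y" if "k \<in> I" for k
    using convex_on_grad_x_tangent[OF F[OF that], of x y] convex_on_grad_x_tangent[OF F[OF that], of y x]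
    by (simp_all add: inner_diff_right)
  have "(\<Sum>k\<in>I. \<mu> k * (F k x - F k y)) \<le> (\<Sum>k\<in>I. \<mu> k * (grad_x (F k) x \<bullet> (x - y)))"
    using tangents(1) x \<open>c > 0\<close> by (intro sum_mono mult_left_mono) (auto simp: \<mu>_def less_imp_le)
  moreover have "(\<Sum>k\<in>I. lam k * (grad_x (F k) y \<bullet> (x - y))) \<le> (\<Sum>k\<in>I. lam k * (F k x - F k y))"
    using tangents(2) KKT by (intro sum_mono mult_left_mono) auto
  moreover have "- (card I / c) \<le> (\<Sum>k\<in>I. \<mu> k * (F k x - F k y))"
    using barrier_multiplier_gap[of I "\<lambda>k. F k y" "\<lambda>k. F k x" s c] KKT x \<open>s \<ge> 0\<close> \<open>c > 0\<close>
    by (simp add: \<mu>_def)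
  moreover have "(\<Sum>k\<in>I. lam k * (F k x - F k y)) \<le> s * sum lam I"
    using KKT x by (intro complementary_slackness_gap) (auto simp: less_imp_le)
  moreover have "m * norm (x - y)^2 \<le> (grad_x F0 x - grad_x F0 y) \<bullet> (x - y)"
    by (rule strongly_convex_grad_x_monotone[OF F0(1,2)])
  moreover have "(grad_x F0 x - grad_x F0 y) \<bullet> (x - y) = g \<bullet> (x - y)
      - (\<Sum>k\<in>I. \<mu> k * (grad_x (F k) x \<bullet> (x - y))) + (\<Sum>k\<in>I. lam k * (grad_x (F k) y \<bullet> (x - y)))"
    unfolding gx gy by (simp add: inner_diff_left inner_add_left inner_sum_left)
  moreover have "g \<bullet> (x - y) \<le> norm g * norm (x - y)"
    by (rule norm_cauchy_schwarz)
  ultimately have "m * norm (x - y)^2 \<le> (card I / c + s * sum lam I) + norm g * norm (x - y)"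
    by linarith
  moreover have "0 \<le> card I / c + s * sum lam I"
    using KKT \<open>s \<ge> 0\<close> \<open>c > 0\<close> by (intro add_nonneg_nonneg mult_nonneg_nonneg sum_nonneg) auto
  ultimately show ?thesis
    by (intro sq_le_of_quadratic_le[OF \<open>m > 0\<close>]) auto
qed

locale time_varying_barrier =
  fixes f0 :: "real^'n \<Rightarrow> real \<Rightarrow> real" and f :: "nat \<Rightarrow> real^'n \<Rightarrow> real \<Rightarrow> real"
    and p :: nat and m :: real and c s :: "real \<Rightarrow> real"
  assumes smooth_f0: "assm1_smooth f0"
    and smooth_f: "\<And>i. i \<in> {1..p} \<Longrightarrow> assm1_smooth (f i)"
    and m_pos: "m > 0"
    and strongly_convex: "\<forall>t\<ge>0. \<forall>x v. v \<bullet> (hess_x (\<lambda>y. f0 y t) x *v v) \<ge> m * (v \<bullet> v)"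
    and convex: "\<And>i t. i \<in> {1..p} \<Longrightarrow> t \<ge> 0 \<Longrightarrow> convex_on UNIV (\<lambda>x. f i x t)"
    and c_pos: "\<And>t. t \<ge> 0 \<Longrightarrow> c t > 0" and c_C1: "C1_t c"
    and s_nonneg: "\<And>t. s t \<ge> 0" and s_C1: "C1_t s"
begin

definition barrier :: "real^'n \<Rightarrow> real \<Rightarrow> real" where
  "barrier x t = f0 x t - (1 / c t) * (\<Sum>i=1..p. ln (s t - f i x t))"

definition relaxed_domain :: "real \<Rightarrow> (real^'n) set" where
  "relaxed_domain t = {x. \<forall>i\<in>{1..p}. f i x t < s t}"

definition barrier_grad :: "real^'n \<Rightarrow> real \<Rightarrow> real^'n" where
  "barrier_grad x t = grad_x (\<lambda>y. f0 y t) x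
     + (1 / c t) *\<^sub>R (\<Sum>i\<in>{1..p}. (1 / (s t - f i x t)) *\<^sub>R grad_x (\<lambda>y. f i y t) x)"

definition barrier_flow_field :: "real^'n^'n \<Rightarrow> real^'n \<Rightarrow> real \<Rightarrow> real^'n" where
  "barrier_flow_field P x t = - (matrix_inv (hess_x (\<lambda>y. barrier y t) x)
     *v (P *v grad_x (\<lambda>y. barrier y t) x + grad_xt barrier x t))"

lemma C2_f0: "t \<ge> 0 \<Longrightarrow> C2_x (\<lambda>y. f0 y t)"
  using smooth_f0 unfolding assm1_smooth_def by blast

lemma C2_f: "i \<in> {1..p} \<Longrightarrow> t \<ge> 0 \<Longrightarrow> C2_x (\<lambda>y. f i y t)"
  using smooth_f unfolding assm1_smooth_def by blast

lemma differentiable_f: "i \<in> {1..p} \<Longrightarrow> t \<ge> 0 \<Longrightarrow> (\<lambda>y. f i y t) differentiable (at x)"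
  using C2_f unfolding C2_x_def by blast

lemma open_relaxed_domain: "t \<ge> 0 \<Longrightarrow> open (relaxed_domain t)"
proof -
  assume t: "t \<ge> 0"
  have "continuous_on UNIV (\<lambda>y. f i y t)" if "i \<in> {1..p}" for i
    using differentiable_f[OF that t]
    by (simp add: continuous_at_imp_continuous_on differentiable_imp_continuous_within)
  then have "open {y. f i y t < s t}" if "i \<in> {1..p}" for i
    using that by (intro open_Collect_less) (auto intro: continuous_intros)
  moreover have "relaxed_domain t = (\<Inter>i\<in>{1..p}. {y. f i y t < s t})"
    by (auto simp: relaxed_domain_def)
  ultimately show ?thesis by auto
qed

lemma grad_barrier:
  assumes t: "t \<ge> 0" and x: "x \<in> relaxed_domain t"
  shows "grad_x (\<lambda>y. barrier y t) x = barrier_grad x t"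
proof (rule grad_x_eqI)
  have "((\<lambda>y. ln (s t - f i y t)) has_derivative
      (\<lambda>h. - (grad_x (\<lambda>y. f i y t) x \<bullet> h) / (s t - f i x t))) (at x)" if i: "i \<in> {1..p}" for i
  proof -
    have "s t - f i x t > 0" using x i by (simp add: relaxed_domain_def)
    then show ?thesis
      using has_derivative_grad_x[OF differentiable_f[OF i t]]
      by (auto intro!: derivative_eq_intros simp: field_simps)
  qed
  then have "((\<lambda>y. \<Sum>i=1..p. ln (s t - f i y t)) has_derivative
      (\<lambda>h. \<Sum>i=1..p. - (grad_x (\<lambda>y. f i y t) x \<bullet> h) / (s t - f i x t))) (at x)"
    by (rule has_derivative_sum)
  then have "((\<lambda>y. barrier y t) has_derivative (\<lambda>h. grad_x (\<lambda>y. f0 y t) x \<bullet> h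
      - (1 / c t) * (\<Sum>i=1..p. - (grad_x (\<lambda>y. f i y t) x \<bullet> h) / (s t - f i x t)))) (at x)"
    unfolding barrier_def using C2_f0[OF t] has_derivative_grad_x unfolding C2_x_def
    by (intro has_derivative_diff has_derivative_mult_right) blast+
  then show "((\<lambda>y. barrier y t) has_derivative (\<lambda>h. barrier_grad x t \<bullet> h)) (at x)"
    by (rule has_derivative_eq_rhs)
      (auto simp: barrier_grad_def fun_eq_iff inner_add_left inner_sum_left sum_divide_distrib
        field_simps sum_negf)
qed

lemma has_derivative_barrier_grad:
  assumes t: "t \<ge> 0" and x: "x \<in> relaxed_domain t"
  shows "((\<lambda>y. barrier_grad y t) has_derivative (\<lambda>h. hess_x (\<lambda>y. f0 y t) x *v h + (1 / c t) *\<^sub>R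
     (\<Sum>i\<in>{1..p}. (1 / (s t - f i x t)) *\<^sub>R (hess_x (\<lambda>y. f i y t) x *v h)
        + ((grad_x (\<lambda>y. f i y t) x \<bullet> h) / (s t - f i x t)^2) *\<^sub>R grad_x (\<lambda>y. f i y t) x))) (at x)"
proof -
  have "((\<lambda>y. (1 / (s t - f i y t)) *\<^sub>R grad_x (\<lambda>y. f i y t) y) has_derivative
      (\<lambda>h. (1 / (s t - f i x t)) *\<^sub>R (hess_x (\<lambda>y. f i y t) x *v h)
        + ((grad_x (\<lambda>y. f i y t) x \<bullet> h) / (s t - f i x t)^2) *\<^sub>R grad_x (\<lambda>y. f i y t) x)) (at x)"
    if i: "i \<in> {1..p}" for i
  proof -
    have pos: "s t - f i x t > 0" using x i by (auto simp: relaxed_domain_def)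
    have "((\<lambda>y. 1 / (s t - f i y t)) has_derivative
        (\<lambda>h. (grad_x (\<lambda>y. f i y t) x \<bullet> h) / (s t - f i x t)^2)) (at x)"
      using has_derivative_grad_x[OF differentiable_f[OF i t]] pos
      by (auto intro!: derivative_eq_intros simp: power2_eq_square field_simps)
    from has_derivative_scaleR[OF this has_derivative_hess_x[OF C2_f[OF i t]]]
    show ?thesis using pos by (simp add: algebra_simps)
  qed
  then show ?thesis unfolding barrier_grad_def
    by (intro has_derivative_add has_derivative_hess_x[OF C2_f0[OF t]] has_derivative_scaleR_right
        has_derivative_sum) auto
qed

lemma hess_barrier_coercive:
  assumes t: "t \<ge> 0" and x: "x \<in> relaxed_domain t"
  shows "v \<bullet> (hess_x (\<lambda>y. barrier y t) x *v v) \<ge> m * (v \<bullet> v)"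
proof -
  have "0 \<le> v \<bullet> ((1 / (s t - f i x t)) *\<^sub>R (hess_x (\<lambda>y. f i y t) x *v v)
        + ((grad_x (\<lambda>y. f i y t) x \<bullet> v) / (s t - f i x t)^2) *\<^sub>R grad_x (\<lambda>y. f i y t) x)"
    if i: "i \<in> {1..p}" for i
  proof -
    have "0 \<le> v \<bullet> (hess_x (\<lambda>y. f i y t) x *v v)"
      by (rule convex_on_hess_x_nonneg[OF C2_f[OF i t] convex[OF i t]])
    moreover have "0 < s t - f i x t" using x i by (auto simp: relaxed_domain_def)
    ultimately show ?thesis
      by (simp add: inner_add_right inner_commute[of v "grad_x (\<lambda>y. f i y t) x"])
  qed
  then have "0 \<le> (\<Sum>i\<in>{1..p}. v \<bullet> ((1 / (s t - f i x t)) *\<^sub>R (hess_x (\<lambda>y. f i y t) x *v v)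
        + ((grad_x (\<lambda>y. f i y t) x \<bullet> v) / (s t - f i x t)^2) *\<^sub>R grad_x (\<lambda>y. f i y t) x))"
    by (rule sum_nonneg)
  then have "0 \<le> v \<bullet> ((1 / c t) *\<^sub>R (\<Sum>i\<in>{1..p}.
      (1 / (s t - f i x t)) *\<^sub>R (hess_x (\<lambda>y. f i y t) x *v v)
        + ((grad_x (\<lambda>y. f i y t) x \<bullet> v) / (s t - f i x t)^2) *\<^sub>R grad_x (\<lambda>y. f i y t) x))"
    using c_pos[OF t] by (simp add: inner_sum_right)
  moreover have "m * (v \<bullet> v) \<le> v \<bullet> (hess_x (\<lambda>y. f0 y t) x *v v)"
    using strongly_convex t by blast
  moreover have "hess_x (\<lambda>y. barrier y t) x *v v = hess_x (\<lambda>y. f0 y t) x *v v + (1 / c t) *\<^sub>R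
     (\<Sum>i\<in>{1..p}. (1 / (s t - f i x t)) *\<^sub>R (hess_x (\<lambda>y. f i y t) x *v v)
        + ((grad_x (\<lambda>y. f i y t) x \<bullet> v) / (s t - f i x t)^2) *\<^sub>R grad_x (\<lambda>y. f i y t) x)"
    by (rule hess_x_eqI[OF open_relaxed_domain[OF t] x grad_barrier[OF t] has_derivative_barrier_grad[OF t x]])
  ultimately show ?thesis by (simp add: inner_add_right)
qed

lemma barrier_grad_differentiable:
  assumes t: "t \<ge> 0" and x: "x \<in> relaxed_domain t"
  shows "(\<lambda>q. barrier_grad (fst q) (snd q)) differentiable (at (x, t) within UNIV \<times> {0..})"
proof -
  have time_only: "(\<lambda>q. h (snd q)) differentiable (at (x, t) within UNIV \<times> {0..})"
    if "C1_t h" for h :: "real \<Rightarrow> real"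
  proof -
    have "(h has_derivative (\<lambda>d. d * tderiv h t)) (at (snd (x, t)) within snd ` (UNIV \<times> {0..}))"
      using has_real_derivative_tderiv[OF that t] by (simp add: has_field_derivative_def mult_commute_abs)
    from diff_chain_within[OF has_derivative_snd[OF has_derivative_ident] this]
    show ?thesis unfolding differentiable_def o_def by blast
  qed
  have "c t \<noteq> 0" using c_pos[OF t] by simp
  moreover have "s t - f i x t \<noteq> 0" if "i \<in> {1..p}" for i
    using x that by (auto simp: relaxed_domain_def)
  ultimately show ?thesis unfolding barrier_grad_def
    using assm1_smooth_grad_x_differentiable[OF smooth_f0 t] assm1_smooth_differentiable[OF smooth_f t]
      assm1_smooth_grad_x_differentiable[OF smooth_f t] time_only[OF c_C1] time_only[OF s_C1]
    by (intro differentiable_add differentiable_scaleR differentiable_divide differentiable_const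
        differentiable_sum differentiable_diff ballI) auto
qed

lemma eventually_in_relaxed_domain:
  assumes t: "t \<ge> 0" and x: "x \<in> relaxed_domain t"
  shows "\<forall>\<^sub>F \<tau> in at t within {0..}. x \<in> relaxed_domain \<tau>"
proof -
  have "\<forall>\<^sub>F \<tau> in at t within {0..}. f i x \<tau> < s \<tau>" if i: "i \<in> {1..p}" for i
  proof -
    have "C1_t (\<lambda>\<tau>. f i x \<tau>)" using smooth_f[OF i] unfolding assm1_smooth_def by blast
    then have "continuous (at t within {0..}) (\<lambda>\<tau>. s \<tau> - f i x \<tau>)"
      using has_real_derivative_tderiv[OF _ t] s_C1 by (intro continuous_intros DERIV_continuous)
    then have "((\<lambda>\<tau>. s \<tau> - f i x \<tau>) \<longlongrightarrow> s t - f i x t) (at t within {0..})"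
      by (simp add: continuous_within)
    moreover have "0 < s t - f i x t" using x i by (auto simp: relaxed_domain_def)
    ultimately have "\<forall>\<^sub>F \<tau> in at t within {0..}. 0 < s \<tau> - f i x \<tau>"
      by (rule order_tendstoD(1))
    then show ?thesis by eventually_elim simp
  qed
  then have "\<forall>\<^sub>F \<tau> in at t within {0..}. \<forall>i\<in>{1..p}. f i x \<tau> < s \<tau>"
    by (intro eventually_ball_finite) auto
  then show ?thesis by (simp add: relaxed_domain_def)
qed

lemma barrier_gradient_flow:
  assumes z_in: "\<And>\<tau>. \<tau> \<ge> 0 \<Longrightarrow> z \<tau> \<in> relaxed_domain \<tau>"
    and z_ode: "\<And>\<tau>. \<tau> \<ge> 0 \<Longrightarrow>
      (z has_vector_derivative barrier_flow_field P (z \<tau>) \<tau>) (at \<tau> within {0..})"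
    and t: "t \<ge> 0"
  shows "((\<lambda>\<tau>. grad_x (\<lambda>y. barrier y \<tau>) (z \<tau>)) has_vector_derivative
           - (P *v grad_x (\<lambda>y. barrier y t) (z t))) (at t within {0..})"
proof -
  let ?H = "hess_x (\<lambda>y. barrier y t) (z t)"
  let ?g = "grad_x (\<lambda>y. barrier y t) (z t)"
  obtain DG where DG: "((\<lambda>q. barrier_grad (fst q) (snd q)) has_derivative DG)
      (at (z t, t) within UNIV \<times> {0..})"
    using barrier_grad_differentiable[OF t z_in[OF t]] unfolding differentiable_def by blast
  have hess: "?H *v h = DG (h, 0)" for h
    using hess_x_eqI[OF open_relaxed_domain[OF t] z_in[OF t] grad_barrier[OF t]
        has_derivative_joint_slice[OF DG]] t by simp
  have "((\<lambda>\<tau>. barrier_grad (z t) \<tau>) has_vector_derivative DG (0, 1)) (at t within {0..})"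
    using has_vector_derivative_joint_comp[where z = "\<lambda>_. z t", OF DG] by simp
  moreover have "\<forall>\<^sub>F \<tau> in at t within {0..}. grad_x (\<lambda>y. barrier y \<tau>) (z t) = barrier_grad (z t) \<tau>"
    using eventually_in_relaxed_domain[OF t z_in[OF t]] unfolding eventually_at_filter
    by eventually_elim (auto intro: grad_barrier)
  ultimately have gxt: "grad_xt barrier (z t) t = DG (0, 1)"
    using grad_xt_eqI grad_barrier[OF t z_in[OF t]] t by blast
  define z' where "z' = barrier_flow_field P (z t) t"
  have "DG (z', 1) = DG (z', 0) + DG (0, 1)"
    using linear_add[OF has_derivative_linear[OF DG], of "(z', 0)" "(0, 1)"] by simp
  also have "\<dots> = ?H *v z' + grad_xt barrier (z t) t" by (simp add: hess gxt)
  also have "\<dots> = - (P *v ?g)"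
    using coercive_matrix_inv_right[OF hess_barrier_coercive[OF t z_in[OF t]] m_pos]
    by (simp add: z'_def barrier_flow_field_def linear_neg[OF matrix_vector_mul_linear])
  finally have "((\<lambda>\<tau>. barrier_grad (z \<tau>) \<tau>) has_vector_derivative - (P *v ?g)) (at t within {0..})"
    using has_vector_derivative_joint_comp[OF DG z_ode[OF t, folded z'_def]] by simp
  then show ?thesis
    by (rule has_vector_derivative_transform_within[OF _ zero_less_one])
      (use t z_in grad_barrier in auto)
qed

lemma barrier_error_bound:
  assumes t: "t \<ge> 0" and x: "x \<in> relaxed_domain t"
    and KKT: "grad_x (\<lambda>y. f0 y t) y + (\<Sum>i=1..p. lam i *\<^sub>R grad_x (\<lambda>y. f i y t) y) = 0"
       "\<And>i. i \<in> {1..p} \<Longrightarrow> lam i \<ge> 0 \<and> lam i * f i y t = 0 \<and> f i y t \<le> 0"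
  shows "norm (x - y)^2 \<le> 4 * norm (grad_x (\<lambda>y. barrier y t) x)^2 / m^2
           + 2 * (p / c t + s t * (\<Sum>i=1..p. lam i)) / m"
proof -
  have "norm (x - y)^2 \<le> 4 * norm (barrier_grad x t)^2 / m^2
           + 2 * (card {1..p} / c t + s t * (\<Sum>i=1..p. lam i)) / m"
    unfolding barrier_grad_def
    by (rule barrier_stationarity_error_bound[where F = "\<lambda>i y. f i y t"])
      (use C2_f0 strongly_convex m_pos convex differentiable_f KKT s_nonneg c_pos t x in
        \<open>auto simp: relaxed_domain_def\<close>)
  then show ?thesis using grad_barrier[OF t x] by simp
qed


lemma barrier_flow_tendsto_kkt_point:
  assumes z_in: "\<And>t. t \<ge> 0 \<Longrightarrow> z t \<in> relaxed_domain t"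
    and z_ode: "\<And>t. t \<ge> 0 \<Longrightarrow>
      (z has_vector_derivative barrier_flow_field P (z t) t) (at t within {0..})"
    and P_ge: "\<And>v. v \<bullet> (P *v v) \<ge> \<sigma> * (v \<bullet> v)" and sigma_pos: "\<sigma> > 0"
    and KKT: "\<And>t. t \<ge> 0 \<Longrightarrow>
        grad_x (\<lambda>y. f0 y t) (xs t) + (\<Sum>i=1..p. lam t i *\<^sub>R grad_x (\<lambda>y. f i y t) (xs t)) = 0"
      "\<And>t i. t \<ge> 0 \<Longrightarrow> i \<in> {1..p} \<Longrightarrow>
        lam t i \<ge> 0 \<and> lam t i * f i (xs t) t = 0 \<and> f i (xs t) t \<le> 0"
    and c_lim: "filterlim c at_top at_top"
    and lim_s: "((\<lambda>t. s t * (\<Sum>i=1..p. lam t i)) \<longlongrightarrow> 0) at_top"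
  shows "((\<lambda>t. z t - xs t) \<longlongrightarrow> 0) at_top"
proof -
  define g where "g t = grad_x (\<lambda>y. barrier y t) (z t)" for t
  define B where "B t = 4 * norm (g t)^2 / m^2 + 2 * (p / c t + s t * (\<Sum>i=1..p. lam t i)) / m" for t
  have "(g \<longlongrightarrow> 0) at_top"
  proof (rule dissipative_tendsto_zero[OF _ _ sigma_pos])
    show "(g has_vector_derivative - (P *v g t)) (at t within {0..})" if "t \<ge> 0" for t
      unfolding g_def by (rule barrier_gradient_flow[OF z_in z_ode that])
    show "g t \<bullet> - (P *v g t) \<le> - \<sigma> * (g t \<bullet> g t)" for t
      using P_ge[of "g t"] by simp
  qed
  from tendsto_power[OF tendsto_norm_zero[OF this], of 2]
  have lim_g: "((\<lambda>t. norm (g t)^2) \<longlongrightarrow> 0) at_top" by simp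
  have lim_c: "((\<lambda>t. p / c t) \<longlongrightarrow> 0) at_top"
    using c_lim by (intro tendsto_divide_0[OF tendsto_const] filterlim_at_top_imp_at_infinity)
  have "(B \<longlongrightarrow> 0) at_top"
    unfolding B_def
    using tendsto_add_zero[OF tendsto_divide_zero[OF tendsto_mult_right_zero[OF lim_g]]
        tendsto_divide_zero[OF tendsto_mult_right_zero[OF tendsto_add_zero[OF lim_c lim_s]]]] .
  then have lim_B: "((\<lambda>t. sqrt (B t)) \<longlongrightarrow> 0) at_top"
    using tendsto_real_sqrt[of B 0] by simp
  have "\<forall>\<^sub>F t in at_top. norm (z t - xs t) \<le> sqrt (B t)"
    using eventually_ge_at_top[of 0]
  proof eventually_elim
    case (elim t)
    have "norm (z t - xs t)^2 \<le> B t"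
      unfolding B_def g_def
      by (rule barrier_error_bound[OF elim z_in[OF elim] KKT(1)[OF elim] KKT(2)[OF elim]])
    then show ?case by (simp add: real_le_rsqrt)
  qed
  from Lim_null_comparison[OF this lim_B] show ?thesis .
qed

end

theorem theorem1:
  fixes f0 :: "real^'n \<Rightarrow> real \<Rightarrow> real"
    and f :: "nat \<Rightarrow> real^'n \<Rightarrow> real \<Rightarrow> real"
    and p :: nat
    and m :: real
    and xs :: "real \<Rightarrow> real^'n"
    and lam :: "real \<Rightarrow> nat \<Rightarrow> real"
    and x0 :: "real^'n"
    and \<epsilon> \<alpha> \<sigma> s0 :: real
    and s c :: "real \<Rightarrow> real"
    and P :: "real^'n^'n"
    and Phi :: "real^'n \<Rightarrow> real \<Rightarrow> real"
    and D :: "real \<Rightarrow> (real^'n) set"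
    and z :: "real \<Rightarrow> real^'n"
  assumes A1_f0: "assm1_smooth f0"
    and A1_f: "\<forall>i\<in>{1..p}. assm1_smooth (f i)"
    and m_pos: "m > 0"
    and strong: "\<forall>t\<ge>0. \<forall>x v. v \<bullet> (hess_x (\<lambda>y. f0 y t) x *v v) \<ge> m * (v \<bullet> v)"
    and cvx: "\<forall>i\<in>{1..p}. \<forall>t\<ge>0. convex_on UNIV (\<lambda>x. f i x t)"
    and slater: "\<exists>xd. \<forall>i\<in>{1..p}. \<forall>t\<ge>0. f i xd t < 0"
    and xs_opt: "\<forall>t\<ge>0. (\<forall>i\<in>{1..p}. f i (xs t) t \<le> 0) \<and>
                    (\<forall>x. (\<forall>i\<in>{1..p}. f i x t \<le> 0) \<longrightarrow> f0 (xs t) t \<le> f0 x t)"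
    and KKT: "\<forall>t\<ge>0. grad_x (\<lambda>y. f0 y t) (xs t)
                  + (\<Sum>i=1..p. lam t i *\<^sub>R grad_x (\<lambda>y. f i y t) (xs t)) = 0
               \<and> (\<forall>i\<in>{1..p}. lam t i * f i (xs t) t = 0 \<and> lam t i \<ge> 0)"
    and A3: "\<forall>\<beta>>0. \<forall>i\<in>{1..p}. ((\<lambda>t. lam t i * exp (- \<beta> * t)) \<longlongrightarrow> 0) at_top"
    and eps_pos: "\<epsilon> > 0"
    and s0_def: "s0 = (if Max ((\<lambda>i. f i x0 0) ` {1..p}) \<le> 0 then 0
                       else Max ((\<lambda>i. f i x0 0) ` {1..p}) + \<epsilon>)"
    and alpha_pos: "\<alpha> > 0"
    and s_def: "\<forall>t. s t = s0 * exp (- \<alpha> * t)"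
    and c_pos: "\<forall>t\<ge>0. c t > 0"
    and c_C1: "C1_t c"
    and c_lim: "filterlim c at_top at_top"
    and P_sym: "transpose P = P"
    and sigma_pos: "\<sigma> > 0"
    and P_ge: "\<forall>v. v \<bullet> (P *v v) \<ge> \<sigma> * (v \<bullet> v)"
    and Phi_def: "\<forall>x t. Phi x t = f0 x t - (1 / c t) * (\<Sum>i=1..p. ln (s t - f i x t))"
    and D_def: "\<forall>t. D t = {x. \<forall>i\<in>{1..p}. f i x t < s t}"
    and z0: "z 0 = x0"
    and z_in: "\<forall>t\<ge>0. z t \<in> D t"
    and z_ode: "\<forall>t\<ge>0. (z has_vector_derivative
                  (- (matrix_inv (hess_x (\<lambda>y. Phi y t) (z t))
                       *v (P *v grad_x (\<lambda>y. Phi y t) (z t) + grad_xt Phi (z t) t))))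
                 (at t within {0..})"
  shows "((\<lambda>t. z t - xs t) \<longlongrightarrow> 0) at_top"
proof -
  have s_eq: "s = (\<lambda>t. s0 * exp (- \<alpha> * t))" using s_def by auto
  have "s0 \<ge> 0" unfolding s0_def using eps_pos by auto
  then have s_nonneg: "s t \<ge> 0" for t by (simp add: s_eq)
  have "C1_t s" unfolding C1_t_def s_eq
    by (intro exI[of _ "\<lambda>t. s0 * (exp (- \<alpha> * t) * - \<alpha>)"] conjI allI impI)
      (auto intro!: derivative_eq_intros continuous_intros)
  interpret time_varying_barrier f0 f p m c s
    using A1_f0 A1_f m_pos strong cvx c_pos c_C1 s_nonneg \<open>C1_t s\<close> by unfold_locales blast+
  have Phi: "Phi = barrier" and D: "D = relaxed_domain"
    using Phi_def D_def by (auto simp: fun_eq_iff barrier_def relaxed_domain_def)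
  have slack: "((\<lambda>t. s t * (\<Sum>i=1..p. lam t i)) \<longlongrightarrow> 0) at_top"
    unfolding s_eq by (rule sum_exp_decay_tendsto_zero) (use A3 alpha_pos in blast)
  show ?thesis
  proof (rule barrier_flow_tendsto_kkt_point[OF _ _ _ sigma_pos _ _ c_lim slack])
    show "z t \<in> relaxed_domain t" if "t \<ge> 0" for t
      using z_in that by (simp add: D)
    show "(z has_vector_derivative barrier_flow_field P (z t) t) (at t within {0..})" if "t \<ge> 0" for t
      using z_ode that by (simp add: Phi barrier_flow_field_def)
    show "v \<bullet> (P *v v) \<ge> \<sigma> * (v \<bullet> v)" for v
      using P_ge by blast
    show "grad_x (\<lambda>y. f0 y t) (xs t) + (\<Sum>i=1..p. lam t i *\<^sub>R grad_x (\<lambda>y. f i y t) (xs t)) = 0"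
      if "t \<ge> 0" for t
      using KKT that by blast
    show "lam t i \<ge> 0 \<and> lam t i * f i (xs t) t = 0 \<and> f i (xs t) t \<le> 0"
      if "t \<ge> 0" "i \<in> {1..p}" for t i
      using KKT xs_opt that by blast
  qed
qed

end
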